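(* Let $\mathcal{G}$ be a locally finite one-ended Borel graph on a standard Borel space $X$, and let $\mathcal{F}\subseteq\mathcal{R}_{\mathcal{G}}$ be a finite Borel equivalence relation each of whose classes induces a connected subgraph of $\mathcal{G}$. Let $Q\subseteq\mathcal{F}$ be a Borel set (of pairs, regarded as edges) such that every $\mathcal{F}$-class still induces a connected subgraph of $\mathcal{G}\setminus Q$. Then $\mathcal{G}\setminus Q$ is one-ended.
   Context: A Borel graph is a symmetric Borel set $\mathcal G\subseteq X^2$; it is one-ended if every connected component is one-ended, i.e. removing any finite set of vertices from it leaves exactly one infinite connected component. $\mathcal R_{\mathcal G}$ is the connectedness relation of $\mathcal G$. A finite Borel equivalence relation is a Borel equivalence relation with finite classes. *)

theory Defs
  imports "HOL-Analysis.Analysis"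
begin

definition borel_graph :: "('a::topological_space \<times> 'a) set \<Rightarrow> bool" where
  "borel_graph G \<longleftrightarrow> sym G \<and> G \<in> sets borel"

definition locally_finite_graph :: "('a \<times> 'a) set \<Rightarrow> bool" where
  "locally_finite_graph G \<longleftrightarrow> (\<forall>x. finite (G `` {x}))"

definition conn_rel :: "('a \<times> 'a) set \<Rightarrow> ('a \<times> 'a) set" where
  "conn_rel G = G\<^sup>*"

definition induced :: "('a \<times> 'a) set \<Rightarrow> 'a set \<Rightarrow> ('a \<times> 'a) set" where
  "induced G V = G \<inter> (V \<times> V)"

definition induces_connected :: "('a \<times> 'a) set \<Rightarrow> 'a set \<Rightarrow> bool" where
  "induces_connected G V \<longleftrightarrow> (\<forall>x\<in>V. \<forall>y\<in>V. (x, y) \<in> (induced G V)\<^sup>*)"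

definition components_on :: "('a \<times> 'a) set \<Rightarrow> 'a set \<Rightarrow> 'a set set" where
  "components_on G V = {(induced G V)\<^sup>* `` {x} | x. x \<in> V}"

definition one_ended_component :: "('a \<times> 'a) set \<Rightarrow> 'a set \<Rightarrow> bool" where
  "one_ended_component G C \<longleftrightarrow>
     (\<forall>S. finite S \<longrightarrow> (\<exists>!D. D \<in> components_on G (C - S) \<and> infinite D))"

definition one_ended :: "('a \<times> 'a) set \<Rightarrow> bool" where
  "one_ended G \<longleftrightarrow> (\<forall>x. one_ended_component G (conn_rel G `` {x}))"

definition finite_borel_equiv :: "('a::topological_space \<times> 'a) set \<Rightarrow> bool" where
  "finite_borel_equiv F \<longleftrightarrow> equiv UNIV F \<and> F \<in> sets borel \<and> (\<forall>x. finite (F `` {x}))"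

definition remove_edges :: "('a \<times> 'a) set \<Rightarrow> ('a \<times> 'a) set \<Rightarrow> ('a \<times> 'a) set" where
  "remove_edges G Q = G - (Q \<union> Q\<inverse>)"

end

theory Submission
  imports Defs
begin

text \<open>Every deleted edge joins two vertices of one F-class, and that class stays connected in
  G - Q; so G and G - Q have the same components, and more precisely a path of G avoiding the
  F-saturation F``S of a finite set S can be rerouted in G - Q avoiding S. In a locally finite
  graph only finitely many vertices of C - F``S lie in finite components, so one-endedness of G
  gives an infinite component E of C - F``S with finite complement in C - F``S. Rerouted, E lies
  in a single component of (G - Q) on C - S, which misses only finitely many vertices and is
  therefore the only infinite one.\<close>

lemma rtrancl_induced_mono: "V \<subseteq> W \<Longrightarrow> (induced R V)\<^sup>* \<subseteq> (induced R W)\<^sup>*"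
  by (rule rtrancl_mono) (auto simp: induced_def)

lemma rtrancl_induced_subset:
  "(a, b) \<in> (induced R V)\<^sup>* \<Longrightarrow> a \<in> V \<Longrightarrow> b \<in> V"
  by (induction rule: rtrancl_induct) (auto simp: induced_def)

lemma components_on_subset: "D \<in> components_on R V \<Longrightarrow> D \<subseteq> V"
  unfolding components_on_def using rtrancl_induced_subset by fastforce

lemma rtrancl_induced_Image_eq:
  assumes "sym R" "(a, b) \<in> (induced R V)\<^sup>*"
  shows "(induced R V)\<^sup>* `` {a} = (induced R V)\<^sup>* `` {b}"
proof -
  have "sym ((induced R V)\<^sup>*)"
    using assms(1) by (intro sym_rtrancl) (auto simp: sym_def induced_def)
  then have "(b, a) \<in> (induced R V)\<^sup>*" using assms(2) by (meson symD)
  then show ?thesis using assms(2) by (auto intro: rtrancl_trans)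
qed

lemma components_on_eq_Image:
  assumes "sym R" "D \<in> components_on R V" "x \<in> D"
  shows "D = (induced R V)\<^sup>* `` {x}"
  using assms rtrancl_induced_Image_eq unfolding components_on_def by fastforce

lemma rtrancl_crosses_boundary:
  "(c, e) \<in> R\<^sup>* \<Longrightarrow> c \<in> K \<Longrightarrow> e \<notin> K \<Longrightarrow> \<exists>a b. a \<in> K \<and> b \<notin> K \<and> (a, b) \<in> R"
  by (induction rule: rtrancl_induct) auto

lemma rtrancl_connected_Image:
  assumes "sym R" "c \<in> R\<^sup>* `` {x}" "e \<in> R\<^sup>* `` {x}"
  shows "(c, e) \<in> R\<^sup>*"
  using assms sym_rtrancl[OF assms(1)] by (blast dest: symD intro: rtrancl_trans)

text \<open>A path from K to a vertex of C outside K leaves K along an edge, which must end in S.\<close>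

lemma finite_component_meets_Image:
  assumes sym: "sym G" and "infinite (G\<^sup>* `` {x})"
    and K: "K \<in> components_on G (G\<^sup>* `` {x} - S)" "finite K"
  shows "K \<inter> G `` S \<noteq> {}"
proof -
  let ?C = "G\<^sup>* `` {x}"
  obtain c where c: "c \<in> K" using K(1) unfolding components_on_def by blast
  have "\<not> ?C \<subseteq> K" using assms(2) K(2) finite_subset by blast
  then obtain e where e: "e \<in> ?C" "e \<notin> K" by blast
  have "c \<in> ?C" using c K(1) components_on_subset by blast
  then have "(c, e) \<in> G\<^sup>*" using rtrancl_connected_Image[OF sym] e(1) by blast
  then obtain a b where ab: "a \<in> K" "b \<notin> K" "(a, b) \<in> G"
    using rtrancl_crosses_boundary c e(2) by metis
  have a: "a \<in> ?C - S" using ab(1) K(1) components_on_subset by blast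
  then have "b \<in> ?C" using ab(3) by (auto intro: rtrancl_into_rtrancl)
  have "b \<in> S"
  proof (rule ccontr)
    assume "b \<notin> S"
    then have "(a, b) \<in> induced G (?C - S)" using a ab(3) \<open>b \<in> ?C\<close> by (auto simp: induced_def)
    then show False using ab(2) components_on_eq_Image[OF sym K(1) ab(1)] by blast
  qed
  then have "a \<in> G `` S" using ab(3) sym by (blast dest: symD)
  then show ?thesis using ab(1) by blast
qed

lemma finite_Union_finite_components:
  assumes sym: "sym G" and "locally_finite_graph G" and "finite S"
  shows "finite (\<Union>{K \<in> components_on G (G\<^sup>* `` {x} - S). finite K})"
proof (cases "finite (G\<^sup>* `` {x})")
  case True
  have "\<Union>{K \<in> components_on G (G\<^sup>* `` {x} - S). finite K} \<subseteq> G\<^sup>* `` {x}"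
    using components_on_subset by blast
  with True show ?thesis by (rule finite_subset[rotated])
next
  case False
  let ?comp = "\<lambda>a. (induced G (G\<^sup>* `` {x} - S))\<^sup>* `` {a}"
  have "{K \<in> components_on G (G\<^sup>* `` {x} - S). finite K} \<subseteq> ?comp ` (G `` S)"
  proof clarify
    fix K assume K: "K \<in> components_on G (G\<^sup>* `` {x} - S)" "finite K"
    then obtain a where "a \<in> K" "a \<in> G `` S"
      using finite_component_meets_Image[OF sym False] by blast
    then show "K \<in> ?comp ` (G `` S)" using components_on_eq_Image[OF sym K(1)] by blast
  qed
  moreover have "finite (G `` S)"
    using \<open>finite S\<close> \<open>locally_finite_graph G\<close> unfolding locally_finite_graph_def
    by (subst Image_eq_UN) simp
  ultimately have "finite {K \<in> components_on G (G\<^sup>* `` {x} - S). finite K}"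
    using finite_subset finite_imageI by blast
  then show ?thesis by (rule finite_Union) blast
qed

lemma one_ended_component_cofinite:
  assumes "sym G" "locally_finite_graph G" "finite S"
    and "one_ended_component G (G\<^sup>* `` {x})"
  shows "\<exists>E \<in> components_on G (G\<^sup>* `` {x} - S). infinite E \<and> finite (G\<^sup>* `` {x} - S - E)"
proof -
  let ?V = "G\<^sup>* `` {x} - S"
  obtain E where E: "E \<in> components_on G ?V" "infinite E"
    and unique: "\<And>D. D \<in> components_on G ?V \<Longrightarrow> infinite D \<Longrightarrow> D = E"
    using assms(3,4) unfolding one_ended_component_def by metis
  have "?V - E \<subseteq> \<Union>{K \<in> components_on G ?V. finite K}"
  proof
    fix c assume c: "c \<in> ?V - E"
    then have "(induced G ?V)\<^sup>* `` {c} \<in> components_on G ?V"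
      unfolding components_on_def by blast
    with c unique show "c \<in> \<Union>{K \<in> components_on G ?V. finite K}" by blast
  qed
  then show ?thesis
    using E finite_Union_finite_components[OF assms(1-3)] by (meson finite_subset)
qed

lemma ex1_infinite_component_if_cofinite:
  assumes sym: "sym H" and "e \<in> V" and E: "E \<subseteq> (induced H V)\<^sup>* `` {e}"
    and "infinite E" and "finite (V - E)"
  shows "\<exists>!D. D \<in> components_on H V \<and> infinite D"
proof (rule ex1I)
  let ?D = "(induced H V)\<^sup>* `` {e}"
  show "?D \<in> components_on H V \<and> infinite ?D"
    using \<open>e \<in> V\<close> E \<open>infinite E\<close> finite_subset unfolding components_on_def by blast
  fix D assume D: "D \<in> components_on H V \<and> infinite D"
  then have "\<not> D \<subseteq> V - E" using \<open>finite (V - E)\<close> finite_subset by blast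
  then obtain y where "y \<in> D" "y \<in> E" using D components_on_subset by blast
  then show "D = ?D"
    using components_on_eq_Image[OF sym] rtrancl_induced_Image_eq[OF sym] D E by blast
qed

text \<open>A deleted edge is replaced by a path inside the F-class of its endpoints.\<close>

lemma rtrancl_induced_reroute:
  assumes "refl F" and deleted: "G - H \<subseteq> F"
    and conn: "\<forall>x. induces_connected H (F `` {x})"
    and saturated: "\<And>a. a \<in> V \<Longrightarrow> F `` {a} \<subseteq> W"
  shows "(induced G V)\<^sup>* \<subseteq> (induced H W)\<^sup>*"
proof (rule rtrancl_subset_rtrancl, clarify)
  fix a b assume "(a, b) \<in> induced G V"
  then have ab: "a \<in> V" "b \<in> V" "(a, b) \<in> G" by (auto simp: induced_def)
  have refl: "c \<in> F `` {c}" for c using \<open>refl F\<close> by (auto simp: refl_on_def)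
  show "(a, b) \<in> (induced H W)\<^sup>*"
  proof (cases "(a, b) \<in> H")
    case True
    then show ?thesis using ab saturated refl by (auto simp: induced_def)
  next
    case False
    then have "b \<in> F `` {a}" using ab(3) deleted by blast
    then have "(a, b) \<in> (induced H (F `` {a}))\<^sup>*"
      using conn refl unfolding induces_connected_def by blast
    then show ?thesis using rtrancl_induced_mono[OF saturated[OF ab(1)]] by blast
  qed
qed

lemma sym_remove_edges: "sym G \<Longrightarrow> sym (remove_edges G Q)"
  unfolding remove_edges_def sym_def by blast

lemma Diff_remove_edges_subset: "sym F \<Longrightarrow> Q \<subseteq> F \<Longrightarrow> G - remove_edges G Q \<subseteq> F"
  unfolding remove_edges_def by (auto dest: symD)

lemma rtrancl_remove_edges:
  assumes "refl F" "sym F" "Q \<subseteq> F"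
    and "\<forall>x. induces_connected (remove_edges G Q) (F `` {x})"
  shows "(remove_edges G Q)\<^sup>* = G\<^sup>*"
proof
  show "(remove_edges G Q)\<^sup>* \<subseteq> G\<^sup>*" unfolding remove_edges_def by (rule rtrancl_mono) blast
  show "G\<^sup>* \<subseteq> (remove_edges G Q)\<^sup>*"
    using rtrancl_induced_reroute[OF assms(1) Diff_remove_edges_subset[OF assms(2,3)] assms(4),
        of UNIV UNIV]
    by (simp add: induced_def)
qed

lemma Image_class_subset_Diff:
  assumes "sym F" "F \<subseteq> G\<^sup>*" "a \<in> G\<^sup>* `` {x} - F `` S"
  shows "F `` {a} \<subseteq> G\<^sup>* `` {x} - S"
proof
  fix b assume b: "b \<in> F `` {a}"
  then have "b \<in> G\<^sup>* `` {x}" using assms(2,3) by (blast intro: rtrancl_trans)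
  moreover have "b \<notin> S" using assms(1,3) b by (blast dest: symD)
  ultimately show "b \<in> G\<^sup>* `` {x} - S" by blast
qed

lemma one_ended_component_remove_edges:
  fixes G F Q :: "('a \<times> 'a) set"
  assumes symG: "sym G" and "locally_finite_graph G" and "one_ended_component G (G\<^sup>* `` {x})"
    and F: "refl F" "sym F" "\<forall>x. finite (F `` {x})" "F \<subseteq> G\<^sup>*"
    and "Q \<subseteq> F" and conn: "\<forall>x. induces_connected (remove_edges G Q) (F `` {x})"
  shows "one_ended_component (remove_edges G Q) (G\<^sup>* `` {x})"
  unfolding one_ended_component_def
proof (intro allI impI)
  fix S :: "'a set" assume "finite S"
  let ?C = "G\<^sup>* `` {x}" and ?H = "remove_edges G Q"
  have "finite (F `` S)" using \<open>finite S\<close> F(3) by (subst Image_eq_UN) simp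
  then obtain E where E: "E \<in> components_on G (?C - F `` S)" "infinite E" "finite (?C - F `` S - E)"
    using one_ended_component_cofinite[OF symG] assms(2,3) by blast
  then obtain e where e: "e \<in> ?C - F `` S" "E = (induced G (?C - F `` S))\<^sup>* `` {e}"
    unfolding components_on_def by blast
  have "e \<in> ?C - S" using e(1) F(1) by (auto simp: refl_on_def)
  moreover have "E \<subseteq> (induced ?H (?C - S))\<^sup>* `` {e}"
    using rtrancl_induced_reroute[OF F(1) Diff_remove_edges_subset[OF F(2) \<open>Q \<subseteq> F\<close>] conn
        Image_class_subset_Diff[OF F(2,4)]] e(2)
    by blast
  moreover note \<open>infinite E\<close>
  moreover have "finite (?C - S - E)"
    using finite_UnI[OF \<open>finite (F `` S)\<close> E(3)] by (rule rev_finite_subset) blast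
  ultimately show "\<exists>!D. D \<in> components_on ?H (?C - S) \<and> infinite D"
    by (rule ex1_infinite_component_if_cofinite[OF sym_remove_edges[OF symG]])
qed

theorem proposition3p9:
  fixes G F Q :: "('a::polish_space \<times> 'a) set"
  assumes "borel_graph G"
    and "locally_finite_graph G"
    and "one_ended G"
    and "finite_borel_equiv F"
    and "F \<subseteq> conn_rel G"
    and "\<forall>x. induces_connected G (F `` {x})"
    and "Q \<subseteq> F"
    and "Q \<in> sets borel"
    and "\<forall>x. induces_connected (remove_edges G Q) (F `` {x})"
  shows "one_ended (remove_edges G Q)"
proof -
  have "sym G" using assms(1) unfolding borel_graph_def by blast
  have F: "refl F" "sym F" "\<forall>x. finite (F `` {x})"
    using assms(4) unfolding finite_borel_equiv_def equiv_def by auto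
  have "F \<subseteq> G\<^sup>*" using assms(5) unfolding conn_rel_def .
  have "one_ended_component (remove_edges G Q) (G\<^sup>* `` {x})" for x
    using assms(3) unfolding one_ended_def conn_rel_def
    by (intro one_ended_component_remove_edges[OF \<open>sym G\<close> assms(2) _ F \<open>F \<subseteq> G\<^sup>*\<close> assms(7,9)])
      blast
  moreover have "(remove_edges G Q)\<^sup>* = G\<^sup>*" using rtrancl_remove_edges[OF F(1,2) assms(7,9)] .
  ultimately show ?thesis unfolding one_ended_def conn_rel_def by simp
qed

end
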